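(* Assume the Setup below with $G=G_\circ$ (so that $E_G=E_\circ$ and $\mathscr{G}=\mathscr{G}_\circ$), that $G_\circ$ is a dynamic causal graph for $(Y_1,Y_0)$ given $\mathscr{G}_\circ$, and that $v^2>0$ almost surely. Then: (a) If the Unconfoundedness Condition (A) holds, then $D=C_G$ almost surely. (b) If the Unconfoundedness Condition (B) holds, the Irreversibility Condition holds, and $\mu_{i,0}<1$ almost surely for every $i\in N$, then $D^{\mathsf I}=C_G^{\mathsf I}$ almost surely.
   Context: Setup. $N$ is a finite set of units, $n=|N|$. For $i\in N$ and $t\in\{0,1\}$, $Y_{i,t}\in\{0,1\}$ are binary outcomes; $Y_1=(Y_{i,1})_{i\in N}$, $Y_0=(Y_{j,0})_{j\in N}$, and for $A\subset N$, $Y_{A,t}=(Y_{i,t})_{i\in A}$. $G_\circ=(N,E_\circ)$ is a (possibly latent) directed graph with $E_\circ\subset\{ij:i,j\in N,i\neq j\}$ (an edge $ij$ means $Y_{j,0}$ causally affects $Y_{i,1}$); $G=(N,E_G)$ is an observed directed graph with $E_G\subset\{ij:i\ne j\}$. Write $N_\circ(i)=\{j:ij\in E_\circ\}$, $\overline N_\circ(i)=N_\circ(i)\cup\{i\}$, $N_\circ(A)=\bigcup_{i\in A}N_\circ(i)$, $\overline N_\circ(A)=N_\circ(A)\cup A$, $d_\circ(i)=|N_\circ(i)|$, and similarly $N_G(i)=\{j:ij\in E_G\}$, $\overline N_G(i)=N_G(i)\cup\{i\}$. $X=(X_i)_{i\in N}$, $X_i\in\mathbb R^p$, are observed covariates.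 $\mathscr G=\sigma(X,G)$ and $\mathscr G_\circ=\sigma(X,G,G_\circ)$; $\mathbf E_{\mathscr H},\mathrm{Var}_{\mathscr H},\mathrm{Cov}_{\mathscr H}$ denote conditional expectation/variance/covariance given a $\sigma$-field $\mathscr H$. Dynamic causal graph: $G_\circ$ is a dynamic causal graph for $(Y_1,Y_0)$ given $\mathscr G_\circ$ if for any pairwise disjoint $A,B,A',B'\subset N$ with $(\overline N_\circ(A)\cup B)\cap(\overline N_\circ(A')\cup B')=\varnothing$, the vectors $(Y_{A,1},Y_{B\cup\overline N_\circ(A),0})$ and $(Y_{A',1},Y_{B'\cup\overline N_\circ(A'),0})$ are conditionally independent given $\mathscr G_\circ$. Potential outcomes: for each $i$, writing $N_\circ(i)=\{j_1,\dots,j_{d_\circ(i)}\}$, there is a map $\rho_i(\cdot;U_{i,1}):\{0,1\}^{d_\circ(i)+1}\to\{0,1\}$ with $U_{i,1}$ a random vector, and $Y_{i,1}=\rho_i(Y_{i,0},Y_{j_1,0},\dots,Y_{j_{d_\circ(i)},0};U_{i,1})$. For $j_k\in N_\circ(i)$ and $d\in\{0,1\}$, $Y^*_{ij_k}(d)=\rho_i(Y_{i,0},Y_{j_1,0},\dots,Y_{j_{k-1},0},d,Y_{j_{k+1},0},\dots,Y_{j_{d_\circ(i)},0};U_{i,1})$. Parameters: $\mu_{j,0}=\mathbf E_{\mathscr G_\circ}[Y_{j,0}]$, $v^2=\frac1n\sum_{j\in N}\mu_{j,0}(1-\mu_{j,0})$, $w_j=\mu_{j,0}(1-\mu_{j,0})/\sum_{\ell\in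 N}\mu_{\ell,0}(1-\mu_{\ell,0})$. $\tau_j=\sum_{i:ij\in E_\circ}\mathbf E_{\mathscr G_\circ}[Y^*_{ij}(1)-Y^*_{ij}(0)]$ and $D=\sum_{j\in N}w_j\tau_j$. For $\mu_{i,0}<1$ write $\mathbf E[Z\mid Y_{i,0}=0,\mathscr G_\circ]:=\mathbf E_{\mathscr G_\circ}[Z(1-Y_{i,0})]/(1-\mu_{i,0})$; $\tau^{\mathsf I}_j=\sum_{i:ij\in E_\circ}\mathbf E[Y^*_{ij}(1)-Y^*_{ij}(0)\mid Y_{i,0}=0,\mathscr G_\circ]$ and $D^{\mathsf I}=\sum_j w_j\tau_j^{\mathsf I}$. Further $C_G=\frac{1}{nv^2}\sum_{i\in N}\sum_{j:ij\in E_G}\mathrm{Cov}_{\mathscr G_\circ}(Y_{i,1},Y_{j,0})$ and $C_G^{\mathsf I}=\frac{1}{nv^2}\sum_{i\in N}\sum_{j:ij\in E_G}\mathrm{Cov}_{\mathscr G_\circ}\big(\tfrac{Y_{i,1}}{1-\mu_{i,0}},Y_{j,0}\big)$. Unconfoundedness Condition (A): for each $ij\in E_\circ$, $(Y^*_{ij}(1),Y^*_{ij}(0),G_\circ)$ is conditionally independent of $Y_{j,0}$ given $\mathscr G$. Unconfoundedness Condition (B): for each $ij\in E_\circ$, $(Y^*_{ij}(1),Y^*_{ij}(0),G_\circ)$ is conditionally independent of $Y_{j,0}$ given $(\mathscr G,Y_{i,0})$. Irreversibility Condition: for every $i$, with probability one $\rho_i(1,d_{j_1},\dots,d_{j_{d_\circ(i)}};U_{i,1})=0$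 for all $(d_{j_1},\dots,d_{j_{d_\circ(i)}})$. *)

theory Defs
  imports "HOL-Probability.Probability"
begin

(* Everything below is stated "conditionally on G_circ": the graph E (= E_G = E_circ),
   the covariates and the unit set are fixed, and the probability space M plays the
   role of the (regular) conditional distribution given G_circ. *)

text \<open>Out-neighbourhoods: an edge (i,j) means Y_{j,0} causally affects Y_{i,1}.\<close>
definition nbr :: "('a \<times> 'a) set \<Rightarrow> 'a \<Rightarrow> 'a set" where
  "nbr E i = {j. (i, j) \<in> E}"

definition cnbr :: "('a \<times> 'a) set \<Rightarrow> 'a \<Rightarrow> 'a set" where
  "cnbr E i = insert i (nbr E i)"

definition cnbrs :: "('a \<times> 'a) set \<Rightarrow> 'a set \<Rightarrow> 'a set" where
  "cnbrs E A = (\<Union>i\<in>A. nbr E i) \<union> A"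

definition dynamic_causal_graph ::
  "'w measure \<Rightarrow> 'a set \<Rightarrow> ('a \<times> 'a) set \<Rightarrow> ('a \<Rightarrow> 'w \<Rightarrow> bool) \<Rightarrow> ('a \<Rightarrow> 'w \<Rightarrow> bool) \<Rightarrow> bool" where
  "dynamic_causal_graph M N E Y1 Y0 \<longleftrightarrow>
     (\<forall>A B A' B'. A \<subseteq> N \<and> B \<subseteq> N \<and> A' \<subseteq> N \<and> B' \<subseteq> N \<and>
        A \<inter> B = {} \<and> A \<inter> A' = {} \<and> A \<inter> B' = {} \<and> B \<inter> A' = {} \<and> B \<inter> B' = {} \<and> A' \<inter> B' = {} \<and>
        (cnbrs E A \<union> B) \<inter> (cnbrs E A' \<union> B') = {} \<longrightarrow>
        prob_space.indep_var M
          (count_space UNIV) (\<lambda>\<omega>. (restrict (\<lambda>i. Y1 i \<omega>) A, restrict (\<lambda>j. Y0 j \<omega>) (B \<union> cnbrs E A)))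
          (count_space UNIV) (\<lambda>\<omega>. (restrict (\<lambda>i. Y1 i \<omega>) A', restrict (\<lambda>j. Y0 j \<omega>) (B' \<union> cnbrs E A'))))"

definition ystar :: "('a \<Rightarrow> ('a \<Rightarrow> bool) \<Rightarrow> 'w \<Rightarrow> bool) \<Rightarrow> ('a \<Rightarrow> 'w \<Rightarrow> bool) \<Rightarrow> 'a \<Rightarrow> 'a \<Rightarrow> bool \<Rightarrow> 'w \<Rightarrow> bool" where
  "ystar rho Y0 i j d \<omega> = rho i ((\<lambda>k. Y0 k \<omega>)(j := d)) \<omega>"

definition cov :: "'w measure \<Rightarrow> ('w \<Rightarrow> real) \<Rightarrow> ('w \<Rightarrow> real) \<Rightarrow> real" where
  "cov M X Z = (\<integral>\<omega>. (X \<omega> - (\<integral>x. X x \<partial>M)) * (Z \<omega> - (\<integral>x. Z x \<partial>M)) \<partial>M)"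

definition mu0 :: "'w measure \<Rightarrow> ('a \<Rightarrow> 'w \<Rightarrow> bool) \<Rightarrow> 'a \<Rightarrow> real" where
  "mu0 M Y0 j = (\<integral>\<omega>. of_bool (Y0 j \<omega>) \<partial>M)"

definition vsq :: "'w measure \<Rightarrow> 'a set \<Rightarrow> ('a \<Rightarrow> 'w \<Rightarrow> bool) \<Rightarrow> real" where
  "vsq M N Y0 = (1 / real (card N)) * (\<Sum>j\<in>N. mu0 M Y0 j * (1 - mu0 M Y0 j))"

definition wt :: "'w measure \<Rightarrow> 'a set \<Rightarrow> ('a \<Rightarrow> 'w \<Rightarrow> bool) \<Rightarrow> 'a \<Rightarrow> real" where
  "wt M N Y0 j = mu0 M Y0 j * (1 - mu0 M Y0 j) / (\<Sum>l\<in>N. mu0 M Y0 l * (1 - mu0 M Y0 l))"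

definition tau :: "'w measure \<Rightarrow> 'a set \<Rightarrow> ('a \<times> 'a) set \<Rightarrow> ('a \<Rightarrow> ('a \<Rightarrow> bool) \<Rightarrow> 'w \<Rightarrow> bool) \<Rightarrow> ('a \<Rightarrow> 'w \<Rightarrow> bool) \<Rightarrow> 'a \<Rightarrow> real" where
  "tau M N E rho Y0 j = (\<Sum>i\<in>{i\<in>N. (i, j) \<in> E}.
      \<integral>\<omega>. of_bool (ystar rho Y0 i j True \<omega>) - of_bool (ystar rho Y0 i j False \<omega>) \<partial>M)"

definition DD :: "'w measure \<Rightarrow> 'a set \<Rightarrow> ('a \<times> 'a) set \<Rightarrow> ('a \<Rightarrow> ('a \<Rightarrow> bool) \<Rightarrow> 'w \<Rightarrow> bool) \<Rightarrow> ('a \<Rightarrow> 'w \<Rightarrow> bool) \<Rightarrow> real" where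
  "DD M N E rho Y0 = (\<Sum>j\<in>N. wt M N Y0 j * tau M N E rho Y0 j)"

text \<open>E[Z | Y_{i,0} = 0] := E[Z (1 - Y_{i,0})] / (1 - mu_{i,0}).\<close>
definition tauI :: "'w measure \<Rightarrow> 'a set \<Rightarrow> ('a \<times> 'a) set \<Rightarrow> ('a \<Rightarrow> ('a \<Rightarrow> bool) \<Rightarrow> 'w \<Rightarrow> bool) \<Rightarrow> ('a \<Rightarrow> 'w \<Rightarrow> bool) \<Rightarrow> 'a \<Rightarrow> real" where
  "tauI M N E rho Y0 j = (\<Sum>i\<in>{i\<in>N. (i, j) \<in> E}.
      (\<integral>\<omega>. (of_bool (ystar rho Y0 i j True \<omega>) - of_bool (ystar rho Y0 i j False \<omega>))
              * (1 - of_bool (Y0 i \<omega>)) \<partial>M) / (1 - mu0 M Y0 i))"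

definition DI :: "'w measure \<Rightarrow> 'a set \<Rightarrow> ('a \<times> 'a) set \<Rightarrow> ('a \<Rightarrow> ('a \<Rightarrow> bool) \<Rightarrow> 'w \<Rightarrow> bool) \<Rightarrow> ('a \<Rightarrow> 'w \<Rightarrow> bool) \<Rightarrow> real" where
  "DI M N E rho Y0 = (\<Sum>j\<in>N. wt M N Y0 j * tauI M N E rho Y0 j)"

definition CG :: "'w measure \<Rightarrow> 'a set \<Rightarrow> ('a \<times> 'a) set \<Rightarrow> ('a \<Rightarrow> 'w \<Rightarrow> bool) \<Rightarrow> ('a \<Rightarrow> 'w \<Rightarrow> bool) \<Rightarrow> real" where
  "CG M N E Y1 Y0 = (1 / (real (card N) * vsq M N Y0)) *
     (\<Sum>i\<in>N. \<Sum>j\<in>{j. (i, j) \<in> E}. cov M (\<lambda>\<omega>. of_bool (Y1 i \<omega>)) (\<lambda>\<omega>. of_bool (Y0 j \<omega>)))"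

definition CGI :: "'w measure \<Rightarrow> 'a set \<Rightarrow> ('a \<times> 'a) set \<Rightarrow> ('a \<Rightarrow> 'w \<Rightarrow> bool) \<Rightarrow> ('a \<Rightarrow> 'w \<Rightarrow> bool) \<Rightarrow> real" where
  "CGI M N E Y1 Y0 = (1 / (real (card N) * vsq M N Y0)) *
     (\<Sum>i\<in>N. \<Sum>j\<in>{j. (i, j) \<in> E}.
        cov M (\<lambda>\<omega>. of_bool (Y1 i \<omega>) / (1 - mu0 M Y0 i)) (\<lambda>\<omega>. of_bool (Y0 j \<omega>)))"

definition indep2 :: "'w measure \<Rightarrow> ('w \<Rightarrow> 'b) \<Rightarrow> ('w \<Rightarrow> 'c) \<Rightarrow> bool" where
  "indep2 M X Z \<longleftrightarrow>
     (\<forall>S T. measure M {\<omega>\<in>space M. X \<omega> \<in> S \<and> Z \<omega> \<in> T}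
        = measure M {\<omega>\<in>space M. X \<omega> \<in> S} * measure M {\<omega>\<in>space M. Z \<omega> \<in> T})"

definition cond_indep_bool :: "'w measure \<Rightarrow> ('w \<Rightarrow> 'b) \<Rightarrow> ('w \<Rightarrow> 'c) \<Rightarrow> ('w \<Rightarrow> bool) \<Rightarrow> bool" where
  "cond_indep_bool M X Z W \<longleftrightarrow>
     (\<forall>b S T. measure M {\<omega>\<in>space M. X \<omega> \<in> S \<and> Z \<omega> \<in> T \<and> W \<omega> = b} * measure M {\<omega>\<in>space M. W \<omega> = b}
        = measure M {\<omega>\<in>space M. X \<omega> \<in> S \<and> W \<omega> = b} * measure M {\<omega>\<in>space M. Z \<omega> \<in> T \<and> W \<omega> = b})"

end

theory Submission
  imports Defs
begin

text \<open>For an edge (i, j) the outcome Y_{i,1} equals Y*_{ij}(1) where Y_{j,0} holds and Y*_{ij}(0)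
  elsewhere, so with \<mu> = \<mu>_{j,0}
    Cov(Y_{i,1}, Y_{j,0}) = (1 - \<mu>) P(Y*_{ij}(1), Y_{j,0}) - \<mu> P(Y*_{ij}(0), \<not> Y_{j,0}).
  Under unconfoundedness (A) both probabilities factor, leaving \<mu>(1 - \<mu>) E[Y*_{ij}(1) - Y*_{ij}(0)].
  Under (B), irreversibility makes both potential outcomes vanish where Y_{i,0} holds, so the
  events may be intersected with \<not> Y_{i,0} and factored conditionally on it; this also needs
  Y_{j,0} independent of Y_{i,0}, which the dynamic causal graph supplies. Weighting these edge
  identities by w_j and exchanging the order of summation gives D = C_G and D^I = C_G^I.\<close>

context prob_space
begin

lemma integrable_of_bool:
  "Measurable.pred M P \<Longrightarrow> integrable M (\<lambda>\<omega>. of_bool (P \<omega>) :: real)"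
  by (rule integrable_const_bound[where B=1]) auto

lemma expectation_of_bool:
  assumes "Measurable.pred M P"
  shows "(\<integral>\<omega>. of_bool (P \<omega>) \<partial>M) = prob {\<omega>\<in>space M. P \<omega>}"
proof -
  have "(\<integral>\<omega>. of_bool (P \<omega>) \<partial>M) = (\<integral>\<omega>. indicator {\<omega>\<in>space M. P \<omega>} \<omega> \<partial>M)"
    by (rule Bochner_Integration.integral_cong) (auto simp: indicator_def)
  also have "\<dots> = prob {\<omega>\<in>space M. P \<omega>}"
    by (simp add: Int_absorb2)
  finally show ?thesis .
qed

lemma prob_not:
  assumes "Measurable.pred M P"
  shows "prob {\<omega>\<in>space M. \<not> P \<omega>} = 1 - prob {\<omega>\<in>space M. P \<omega>}"
proof -
  have "{\<omega>\<in>space M. \<not> P \<omega>} = space M - {\<omega>\<in>space M. P \<omega>}" by auto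
  then show ?thesis using assms by (simp add: prob_compl)
qed

lemma cov_of_bool:
  assumes [measurable]: "Measurable.pred M Y" "Measurable.pred M Z"
  shows "cov M (\<lambda>\<omega>. of_bool (Y \<omega>)) (\<lambda>\<omega>. of_bool (Z \<omega>))
     = prob {\<omega>\<in>space M. Y \<omega> \<and> Z \<omega>} - prob {\<omega>\<in>space M. Y \<omega>} * prob {\<omega>\<in>space M. Z \<omega>}"
proof -
  define a where "a = (\<integral>\<omega>. of_bool (Y \<omega>) \<partial>M :: real)"
  define b where "b = (\<integral>\<omega>. of_bool (Z \<omega>) \<partial>M :: real)"
  have "cov M (\<lambda>\<omega>. of_bool (Y \<omega>)) (\<lambda>\<omega>. of_bool (Z \<omega>))
     = (\<integral>\<omega>. of_bool (Y \<omega> \<and> Z \<omega>) - (b * of_bool (Y \<omega>) + a * of_bool (Z \<omega>) - a * b) \<partial>M)"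
    unfolding cov_def a_def[symmetric] b_def[symmetric]
    by (rule Bochner_Integration.integral_cong) (auto simp: algebra_simps)
  also have "\<dots> = (\<integral>\<omega>. of_bool (Y \<omega> \<and> Z \<omega>) \<partial>M) - a * b"
    by (simp add: integrable_of_bool a_def b_def prob_space)
  finally show ?thesis by (simp add: expectation_of_bool a_def b_def)
qed

lemma cov_divide_left: "cov M (\<lambda>\<omega>. X \<omega> / c) Z = cov M X Z / c"
  by (simp add: cov_def diff_divide_distrib[symmetric])

lemma cov_of_bool_switch:
  assumes [measurable]: "Measurable.pred M A" "Measurable.pred M B" "Measurable.pred M Z"
    and Y: "\<And>\<omega>. \<omega> \<in> space M \<Longrightarrow> Y \<omega> = (if Z \<omega> then A \<omega> else B \<omega>)"
  shows "cov M (\<lambda>\<omega>. of_bool (Y \<omega>)) (\<lambda>\<omega>. of_bool (Z \<omega>))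
    = (1 - prob {\<omega>\<in>space M. Z \<omega>}) * prob {\<omega>\<in>space M. A \<omega> \<and> Z \<omega>}
      - prob {\<omega>\<in>space M. Z \<omega>} * prob {\<omega>\<in>space M. B \<omega> \<and> \<not> Z \<omega>}"
proof -
  have [measurable]: "Measurable.pred M Y"
    by (rule measurable_cong[where f="\<lambda>\<omega>. Z \<omega> \<and> A \<omega> \<or> \<not> Z \<omega> \<and> B \<omega>", THEN iffD1])
      (auto simp: Y split: if_splits)
  have "{\<omega>\<in>space M. Y \<omega>} = {\<omega>\<in>space M. A \<omega> \<and> Z \<omega>} \<union> {\<omega>\<in>space M. B \<omega> \<and> \<not> Z \<omega>}"
    using Y by (auto split: if_splits)
  then have "prob {\<omega>\<in>space M. Y \<omega>}
      = prob {\<omega>\<in>space M. A \<omega> \<and> Z \<omega>} + prob {\<omega>\<in>space M. B \<omega> \<and> \<not> Z \<omega>}"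
    by (simp add: finite_measure_Union disjoint_iff)
  moreover have "{\<omega>\<in>space M. Y \<omega> \<and> Z \<omega>} = {\<omega>\<in>space M. A \<omega> \<and> Z \<omega>}"
    using Y by auto
  ultimately show ?thesis by (simp add: cov_of_bool algebra_simps)
qed

lemma cov_of_bool_switch_indep:
  assumes [measurable]: "Measurable.pred M A" "Measurable.pred M B" "Measurable.pred M Z"
    and Y: "\<And>\<omega>. \<omega> \<in> space M \<Longrightarrow> Y \<omega> = (if Z \<omega> then A \<omega> else B \<omega>)"
    and indep: "indep2 M (\<lambda>\<omega>. (A \<omega>, B \<omega>)) Z"
  shows "cov M (\<lambda>\<omega>. of_bool (Y \<omega>)) (\<lambda>\<omega>. of_bool (Z \<omega>))
    = (\<integral>\<omega>. of_bool (Z \<omega>) \<partial>M) * (1 - (\<integral>\<omega>. of_bool (Z \<omega>) \<partial>M))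
      * (\<integral>\<omega>. of_bool (A \<omega>) - of_bool (B \<omega>) \<partial>M)"
proof -
  have AZ: "prob {\<omega>\<in>space M. A \<omega> \<and> Z \<omega>} = prob {\<omega>\<in>space M. A \<omega>} * prob {\<omega>\<in>space M. Z \<omega>}"
    using indep[unfolded indep2_def, rule_format, of "{p. fst p}" "{True}"] by simp
  have BZ: "prob {\<omega>\<in>space M. B \<omega> \<and> \<not> Z \<omega>}
      = prob {\<omega>\<in>space M. B \<omega>} * (1 - prob {\<omega>\<in>space M. Z \<omega>})"
    using indep[unfolded indep2_def, rule_format, of "{p. snd p}" "{False}"] by (simp add: prob_not)
  have AB: "(\<integral>\<omega>. of_bool (A \<omega>) - of_bool (B \<omega>) \<partial>M)
      = prob {\<omega>\<in>space M. A \<omega>} - prob {\<omega>\<in>space M. B \<omega>}"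
    by (simp add: integrable_of_bool expectation_of_bool)
  show ?thesis
    using cov_of_bool_switch[OF assms(1-3) Y]
    unfolding AZ BZ AB expectation_of_bool[OF assms(3)]
    by (simp add: algebra_simps)
qed

lemma cond_indep_bool_prob_factor:
  assumes ci: "cond_indep_bool M X Z W" and indep: "indep2 M Z W"
    and pos: "prob {\<omega>\<in>space M. W \<omega> = b} \<noteq> 0"
  shows "prob {\<omega>\<in>space M. X \<omega> \<in> S \<and> Z \<omega> \<in> T \<and> W \<omega> = b}
    = prob {\<omega>\<in>space M. X \<omega> \<in> S \<and> W \<omega> = b} * prob {\<omega>\<in>space M. Z \<omega> \<in> T}"
proof -
  have "prob {\<omega>\<in>space M. Z \<omega> \<in> T \<and> W \<omega> = b} = prob {\<omega>\<in>space M. Z \<omega> \<in> T} * prob {\<omega>\<in>space M. W \<omega> = b}"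
    using indep[unfolded indep2_def, rule_format, of T "{b}"] by simp
  then show ?thesis
    using ci[unfolded cond_indep_bool_def, rule_format, where b=b and S=S and T=T] pos by simp
qed

lemma cov_of_bool_switch_cond_indep:
  assumes [measurable]: "Measurable.pred M A" "Measurable.pred M B" "Measurable.pred M Z"
      "Measurable.pred M W"
    and Y: "\<And>\<omega>. \<omega> \<in> space M \<Longrightarrow> Y \<omega> = (if Z \<omega> then A \<omega> else B \<omega>)"
    and ci: "cond_indep_bool M (\<lambda>\<omega>. (A \<omega>, B \<omega>)) Z W"
    and indep: "indep2 M Z W"
    and irr: "AE \<omega> in M. W \<omega> \<longrightarrow> \<not> A \<omega> \<and> \<not> B \<omega>"
    and lt: "(\<integral>\<omega>. of_bool (W \<omega>) \<partial>M) < (1::real)"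
  shows "cov M (\<lambda>\<omega>. of_bool (Y \<omega>) / (1 - (\<integral>\<omega>. of_bool (W \<omega>) \<partial>M))) (\<lambda>\<omega>. of_bool (Z \<omega>))
    = (\<integral>\<omega>. of_bool (Z \<omega>) \<partial>M) * (1 - (\<integral>\<omega>. of_bool (Z \<omega>) \<partial>M))
      * ((\<integral>\<omega>. (of_bool (A \<omega>) - of_bool (B \<omega>)) * (1 - of_bool (W \<omega>)) \<partial>M)
         / (1 - (\<integral>\<omega>. of_bool (W \<omega>) \<partial>M)))"
proof -
  have pos: "prob {\<omega>\<in>space M. W \<omega> = False} \<noteq> 0"
    using lt by (simp add: expectation_of_bool prob_not)
  have "prob {\<omega>\<in>space M. A \<omega> \<and> Z \<omega>} = prob {\<omega>\<in>space M. A \<omega> \<and> Z \<omega> \<and> \<not> W \<omega>}"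
    by (rule measure_eq_AE) (use irr in auto)
  also have "\<dots> = prob {\<omega>\<in>space M. A \<omega> \<and> \<not> W \<omega>} * prob {\<omega>\<in>space M. Z \<omega>}"
    using cond_indep_bool_prob_factor[OF ci indep pos, of "{p. fst p}" "{True}"] by simp
  finally have AZ: "prob {\<omega>\<in>space M. A \<omega> \<and> Z \<omega>}
      = prob {\<omega>\<in>space M. A \<omega> \<and> \<not> W \<omega>} * prob {\<omega>\<in>space M. Z \<omega>}" .
  have "prob {\<omega>\<in>space M. B \<omega> \<and> \<not> Z \<omega>} = prob {\<omega>\<in>space M. B \<omega> \<and> \<not> Z \<omega> \<and> \<not> W \<omega>}"
    by (rule measure_eq_AE) (use irr in auto)
  also have "\<dots> = prob {\<omega>\<in>space M. B \<omega> \<and> \<not> W \<omega>} * prob {\<omega>\<in>space M. \<not> Z \<omega>}"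
    using cond_indep_bool_prob_factor[OF ci indep pos, of "{p. snd p}" "{False}"] by simp
  finally have BZ: "prob {\<omega>\<in>space M. B \<omega> \<and> \<not> Z \<omega>}
      = prob {\<omega>\<in>space M. B \<omega> \<and> \<not> W \<omega>} * prob {\<omega>\<in>space M. \<not> Z \<omega>}" .
  have "(\<integral>\<omega>. (of_bool (A \<omega>) - of_bool (B \<omega>)) * (1 - of_bool (W \<omega>)) \<partial>M)
     = (\<integral>\<omega>. of_bool (A \<omega> \<and> \<not> W \<omega>) - (of_bool (B \<omega> \<and> \<not> W \<omega>) :: real) \<partial>M)"
    by (rule Bochner_Integration.integral_cong) auto
  also have "\<dots> = prob {\<omega>\<in>space M. A \<omega> \<and> \<not> W \<omega>} - prob {\<omega>\<in>space M. B \<omega> \<and> \<not> W \<omega>}"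
    by (simp add: integrable_of_bool expectation_of_bool)
  finally have AB: "(\<integral>\<omega>. (of_bool (A \<omega>) - of_bool (B \<omega>)) * (1 - of_bool (W \<omega>)) \<partial>M)
      = prob {\<omega>\<in>space M. A \<omega> \<and> \<not> W \<omega>} - prob {\<omega>\<in>space M. B \<omega> \<and> \<not> W \<omega>}" .
  have "cov M (\<lambda>\<omega>. of_bool (Y \<omega>)) (\<lambda>\<omega>. of_bool (Z \<omega>))
    = prob {\<omega>\<in>space M. Z \<omega>} * (1 - prob {\<omega>\<in>space M. Z \<omega>})
      * (prob {\<omega>\<in>space M. A \<omega> \<and> \<not> W \<omega>} - prob {\<omega>\<in>space M. B \<omega> \<and> \<not> W \<omega>})"
    using cov_of_bool_switch[OF assms(1-3) Y] unfolding AZ BZ prob_not[OF assms(3)]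
    by (simp add: algebra_simps)
  then show ?thesis
    unfolding cov_divide_left AB expectation_of_bool[OF assms(3)] by simp
qed

lemma indep2_of_dynamic_causal_graph:
  assumes dcg: "dynamic_causal_graph M N E Y1 Y0" and "i \<in> N" "j \<in> N" "i \<noteq> j"
  shows "indep2 M (Y0 i) (Y0 j)"
  unfolding indep2_def
proof (intro allI)
  fix S T
  let ?X = "\<lambda>\<omega>. (restrict (\<lambda>i. Y1 i \<omega>) {}, restrict (\<lambda>k. Y0 k \<omega>) {i})"
  let ?Z = "\<lambda>\<omega>. (restrict (\<lambda>i. Y1 i \<omega>) {}, restrict (\<lambda>k. Y0 k \<omega>) {j})"
  have "indep_var (count_space UNIV) ?X (count_space UNIV) ?Z"
    using dcg[unfolded dynamic_causal_graph_def, rule_format, of "{}" "{i}" "{}" "{j}"] assms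
    by (simp add: cnbrs_def)
  moreover have "?X -` {p. snd p i \<in> S} \<inter> space M
      \<in> sigma_sets (space M) {?X -` A \<inter> space M | A. A \<in> sets (count_space UNIV)}"
    by (rule sigma_sets.Basic, rule CollectI, rule exI, rule conjI[OF refl]) simp
  moreover have "?Z -` {p. snd p j \<in> T} \<inter> space M
      \<in> sigma_sets (space M) {?Z -` A \<inter> space M | A. A \<in> sets (count_space UNIV)}"
    by (rule sigma_sets.Basic, rule CollectI, rule exI, rule conjI[OF refl]) simp
  ultimately have "prob ((?X -` {p. snd p i \<in> S} \<inter> space M) \<inter> (?Z -` {p. snd p j \<in> T} \<inter> space M))
      = prob (?X -` {p. snd p i \<in> S} \<inter> space M) * prob (?Z -` {p. snd p j \<in> T} \<inter> space M)"
    unfolding indep_var_eq indep_sets2_eq by blast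
  moreover have "(?X -` {p. snd p i \<in> S} \<inter> space M) \<inter> (?Z -` {p. snd p j \<in> T} \<inter> space M)
      = {\<omega>\<in>space M. Y0 i \<omega> \<in> S \<and> Y0 j \<omega> \<in> T}"
    by auto
  moreover have "?X -` {p. snd p i \<in> S} \<inter> space M = {\<omega>\<in>space M. Y0 i \<omega> \<in> S}"
    by auto
  moreover have "?Z -` {p. snd p j \<in> T} \<inter> space M = {\<omega>\<in>space M. Y0 j \<omega> \<in> T}"
    by auto
  ultimately show "prob {\<omega>\<in>space M. Y0 i \<omega> \<in> S \<and> Y0 j \<omega> \<in> T}
      = prob {\<omega>\<in>space M. Y0 i \<omega> \<in> S} * prob {\<omega>\<in>space M. Y0 j \<omega> \<in> T}"
    by simp
qed

end

text \<open>r (f \<omega>) \<omega> is a finite disjunction over the possible restrictions of f \<omega> to C.\<close>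
lemma pred_finitely_determined:
  assumes C: "finite C" and [measurable]: "\<And>d. Measurable.pred M (r d)"
    and local: "\<And>d d' \<omega>. (\<forall>k\<in>C. d k = d' k) \<Longrightarrow> r d \<omega> = r d' \<omega>"
    and [measurable]: "\<And>k. k \<in> C \<Longrightarrow> Measurable.pred M (\<lambda>\<omega>. f \<omega> k)"
  shows "Measurable.pred M (\<lambda>\<omega>. r (f \<omega>) \<omega>)"
proof -
  have "r (f \<omega>) \<omega> \<longleftrightarrow> (\<exists>S\<in>Pow C. (\<forall>k\<in>C. f \<omega> k \<longleftrightarrow> k \<in> S) \<and> r (\<lambda>k. k \<in> S) \<omega>)" for \<omega>
  proof
    assume "r (f \<omega>) \<omega>"
    moreover have "r (f \<omega>) \<omega> = r (\<lambda>k. k \<in> {k\<in>C. f \<omega> k}) \<omega>"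
      by (rule local) auto
    ultimately show "\<exists>S\<in>Pow C. (\<forall>k\<in>C. f \<omega> k \<longleftrightarrow> k \<in> S) \<and> r (\<lambda>k. k \<in> S) \<omega>"
      by (intro bexI[of _ "{k\<in>C. f \<omega> k}"]) auto
  next
    assume "\<exists>S\<in>Pow C. (\<forall>k\<in>C. f \<omega> k \<longleftrightarrow> k \<in> S) \<and> r (\<lambda>k. k \<in> S) \<omega>"
    then obtain S where "\<forall>k\<in>C. f \<omega> k \<longleftrightarrow> k \<in> S" and "r (\<lambda>k. k \<in> S) \<omega>"
      by blast
    then show "r (f \<omega>) \<omega>"
      using local[of "f \<omega>" "\<lambda>k. k \<in> S" \<omega>] by auto
  qed
  moreover have "Measurable.pred M (\<lambda>\<omega>. \<exists>S\<in>Pow C. (\<forall>k\<in>C. f \<omega> k \<longleftrightarrow> k \<in> S) \<and> r (\<lambda>k. k \<in> S) \<omega>)"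
    using C by (intro pred_intros_finite pred_intros_logic) auto
  ultimately show ?thesis by simp
qed

lemma weighted_edge_sum_transpose:
  fixes g :: "'a \<Rightarrow> real" and c d :: "'a \<Rightarrow> 'a \<Rightarrow> real"
  assumes "finite N" and "E \<subseteq> N \<times> N"
    and c: "\<And>i j. (i, j) \<in> E \<Longrightarrow> c i j = g j * d i j"
  shows "(\<Sum>j\<in>N. g j / (\<Sum>l\<in>N. g l) * (\<Sum>i\<in>{i\<in>N. (i, j) \<in> E}. d i j))
     = 1 / (real (card N) * (1 / real (card N) * (\<Sum>j\<in>N. g j))) *
       (\<Sum>i\<in>N. \<Sum>j\<in>{j. (i, j) \<in> E}. c i j)"
proof (cases "N = {}")
  case False
  define S where "S = (\<Sum>j\<in>N. g j)"
  have "(\<Sum>j\<in>N. g j / S * (\<Sum>i\<in>{i\<in>N. (i, j) \<in> E}. d i j))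
      = 1 / S * (\<Sum>j\<in>N. \<Sum>i\<in>N. if (i, j) \<in> E then g j * d i j else 0)"
    by (simp add: sum.inter_filter[OF \<open>finite N\<close>] sum_distrib_left sum_distrib_right
        if_distrib if_distribR cong: if_cong)
  also have "\<dots> = 1 / S * (\<Sum>i\<in>N. \<Sum>j\<in>N. if (i, j) \<in> E then g j * d i j else 0)"
    by (subst sum.swap) (rule refl)
  also have "\<dots> = 1 / S * (\<Sum>i\<in>N. \<Sum>j\<in>{j. (i, j) \<in> E}. c i j)"
  proof -
    have "{j. (i, j) \<in> E} = {j\<in>N. (i, j) \<in> E}" for i
      using assms(2) by auto
    then show ?thesis
      by (simp add: sum.inter_filter[OF \<open>finite N\<close>] c cong: if_cong)
  qed
  finally show ?thesis
    using False \<open>finite N\<close> by (simp add: S_def)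
qed simp

lemma rho_eq_ystar_switch:
  "rho i (\<lambda>k. Y0 k \<omega>) \<omega>
    = (if Y0 j \<omega> then ystar rho Y0 i j True \<omega> else ystar rho Y0 i j False \<omega>)"
  by (cases "Y0 j \<omega>") (simp_all add: ystar_def fun_upd_idem)

locale potential_outcome_model = prob_space M for M :: "'w measure" +
  fixes N :: "'a set" and E :: "('a \<times> 'a) set" and Y0 Y1 :: "'a \<Rightarrow> 'w \<Rightarrow> bool"
    and rho :: "'a \<Rightarrow> ('a \<Rightarrow> bool) \<Rightarrow> 'w \<Rightarrow> bool"
  assumes finite_N: "finite N"
    and edges: "E \<subseteq> {(i, j). i \<in> N \<and> j \<in> N \<and> i \<noteq> j}"
    and pred_Y0: "\<And>j. j \<in> N \<Longrightarrow> Measurable.pred M (Y0 j)"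
    and pred_rho: "\<And>i d. i \<in> N \<Longrightarrow> Measurable.pred M (rho i d)"
    and rho_local: "\<And>i d d' \<omega>. i \<in> N \<Longrightarrow> (\<forall>k\<in>cnbr E i. d k = d' k) \<Longrightarrow> rho i d \<omega> = rho i d' \<omega>"
    and Y1_eq: "\<And>i \<omega>. i \<in> N \<Longrightarrow> \<omega> \<in> space M \<Longrightarrow> Y1 i \<omega> = rho i (\<lambda>j. Y0 j \<omega>) \<omega>"
begin

lemma pred_ystar:
  assumes "i \<in> N"
  shows "Measurable.pred M (ystar rho Y0 i j d)"
proof -
  have cnbr_N: "cnbr E i \<subseteq> N"
    using assms edges by (auto simp: cnbr_def nbr_def)
  have "Measurable.pred M (\<lambda>\<omega>. rho i ((\<lambda>k. Y0 k \<omega>)(j := d)) \<omega>)"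
  proof (rule pred_finitely_determined[OF finite_subset[OF cnbr_N finite_N],
        where r = "rho i" and f = "\<lambda>\<omega>. (\<lambda>k. Y0 k \<omega>)(j := d)"])
    fix k assume "k \<in> cnbr E i"
    then show "Measurable.pred M (\<lambda>\<omega>. ((\<lambda>k. Y0 k \<omega>)(j := d)) k)"
      using cnbr_N pred_Y0 by (cases "k = j") auto
  qed (use assms pred_rho rho_local in auto)
  then show ?thesis
    unfolding ystar_def[abs_def] .
qed

lemma Y1_eq_ystar_switch:
  assumes "(i, j) \<in> E" and "\<omega> \<in> space M"
  shows "Y1 i \<omega> = (if Y0 j \<omega> then ystar rho Y0 i j True \<omega> else ystar rho Y0 i j False \<omega>)"
proof -
  have "i \<in> N"
    using assms(1) edges by auto
  then show ?thesis
    using Y1_eq[OF _ assms(2)] rho_eq_ystar_switch[of rho i Y0 \<omega> j] by (simp only:)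
qed

lemma DD_eq_CG:
  assumes indep: "\<forall>(i, j)\<in>E. indep2 M
      (\<lambda>\<omega>. (ystar rho Y0 i j True \<omega>, ystar rho Y0 i j False \<omega>)) (Y0 j)"
  shows "DD M N E rho Y0 = CG M N E Y1 Y0"
  unfolding DD_def wt_def tau_def CG_def vsq_def
proof (rule weighted_edge_sum_transpose[OF finite_N])
  show "E \<subseteq> N \<times> N"
    using edges by auto
  fix i j assume ij: "(i, j) \<in> E"
  then have "i \<in> N" "j \<in> N"
    using edges by auto
  then show "cov M (\<lambda>\<omega>. of_bool (Y1 i \<omega>)) (\<lambda>\<omega>. of_bool (Y0 j \<omega>))
      = mu0 M Y0 j * (1 - mu0 M Y0 j)
        * (\<integral>\<omega>. of_bool (ystar rho Y0 i j True \<omega>) - of_bool (ystar rho Y0 i j False \<omega>) \<partial>M)"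
    unfolding mu0_def
    using ij indep by (intro cov_of_bool_switch_indep pred_ystar pred_Y0 Y1_eq_ystar_switch) auto
qed

lemma DI_eq_CGI:
  assumes dcg: "dynamic_causal_graph M N E Y1 Y0"
    and cond_indep: "\<forall>(i, j)\<in>E. cond_indep_bool M
      (\<lambda>\<omega>. (ystar rho Y0 i j True \<omega>, ystar rho Y0 i j False \<omega>)) (Y0 j) (Y0 i)"
    and irreversible: "\<forall>i\<in>N. AE \<omega> in M. \<forall>d. d i \<longrightarrow> \<not> rho i d \<omega>"
    and mu0_lt_1: "\<forall>i\<in>N. mu0 M Y0 i < 1"
  shows "DI M N E rho Y0 = CGI M N E Y1 Y0"
  unfolding DI_def wt_def tauI_def CGI_def vsq_def
proof (rule weighted_edge_sum_transpose[OF finite_N])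
  show "E \<subseteq> N \<times> N"
    using edges by auto
  fix i j assume ij: "(i, j) \<in> E"
  then have N: "i \<in> N" "j \<in> N" "i \<noteq> j"
    using edges by auto
  have "AE \<omega> in M. Y0 i \<omega> \<longrightarrow> \<not> ystar rho Y0 i j True \<omega> \<and> \<not> ystar rho Y0 i j False \<omega>"
    using irreversible N by (auto elim!: AE_mp simp: ystar_def)
  then show "cov M (\<lambda>\<omega>. of_bool (Y1 i \<omega>) / (1 - mu0 M Y0 i)) (\<lambda>\<omega>. of_bool (Y0 j \<omega>))
      = mu0 M Y0 j * (1 - mu0 M Y0 j)
        * ((\<integral>\<omega>. (of_bool (ystar rho Y0 i j True \<omega>) - of_bool (ystar rho Y0 i j False \<omega>))
              * (1 - of_bool (Y0 i \<omega>)) \<partial>M) / (1 - mu0 M Y0 i))"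
    unfolding mu0_def
    using ij N cond_indep mu0_lt_1 indep2_of_dynamic_causal_graph[OF dcg]
    by (intro cov_of_bool_switch_cond_indep pred_ystar pred_Y0 Y1_eq_ystar_switch)
      (auto simp: mu0_def)
qed

end

theorem lemma1:
  fixes M :: "'w measure" and N :: "'a set" and E :: "('a \<times> 'a) set"
    and Y0 Y1 :: "'a \<Rightarrow> 'w \<Rightarrow> bool"
    and rho :: "'a \<Rightarrow> ('a \<Rightarrow> bool) \<Rightarrow> 'w \<Rightarrow> bool"
  assumes prob: "prob_space M"
    and finN: "finite N"
    and edges: "E \<subseteq> {(i, j). i \<in> N \<and> j \<in> N \<and> i \<noteq> j}"
    and Y0_meas: "\<And>j. j \<in> N \<Longrightarrow> Y0 j \<in> measurable M (count_space UNIV)"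
    and rho_meas: "\<And>i d. i \<in> N \<Longrightarrow> rho i d \<in> measurable M (count_space UNIV)"
    and rho_local: "\<And>i d d' \<omega>. i \<in> N \<Longrightarrow> (\<forall>k\<in>cnbr E i. d k = d' k) \<Longrightarrow> rho i d \<omega> = rho i d' \<omega>"
    and Y1_def: "\<And>i \<omega>. i \<in> N \<Longrightarrow> \<omega> \<in> space M \<Longrightarrow> Y1 i \<omega> = rho i (\<lambda>j. Y0 j \<omega>) \<omega>"
    and dcg: "dynamic_causal_graph M N E Y1 Y0"
    and vpos: "vsq M N Y0 > 0"
  shows
    "((\<forall>(i, j)\<in>E. indep2 M
          (\<lambda>\<omega>. (ystar rho Y0 i j True \<omega>, ystar rho Y0 i j False \<omega>)) (Y0 j))
        \<longrightarrow> DD M N E rho Y0 = CG M N E Y1 Y0)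
     \<and>
     ((\<forall>(i, j)\<in>E. cond_indep_bool M
          (\<lambda>\<omega>. (ystar rho Y0 i j True \<omega>, ystar rho Y0 i j False \<omega>)) (Y0 j) (Y0 i))
      \<and> (\<forall>i\<in>N. AE \<omega> in M. \<forall>d. d i \<longrightarrow> \<not> rho i d \<omega>)
      \<and> (\<forall>i\<in>N. mu0 M Y0 i < 1)
        \<longrightarrow> DI M N E rho Y0 = CGI M N E Y1 Y0)"
proof -
  interpret potential_outcome_model M N E Y0 Y1 rho
    using prob finN edges Y0_meas rho_meas rho_local Y1_def
    by (simp add: potential_outcome_model_def potential_outcome_model_axioms_def pred_def)
  show ?thesis
    using DD_eq_CG DI_eq_CGI[OF dcg] by blast
qed

end
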